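(* Let $P$ be a classifier on $\mathbb{R}^n$ that is non-trivial, i.e. its label set $L_P$ has more than one element. Then $P$ has infinite pointwise coverage if and only if $P$ is a refined linear classifier.
   Context: A classifier is a partition $P$ of $\mathbb{R}^n$ together with a distinguished member $R \in P$, the refinement set, which may be empty and which is both meagre and Lebesgue null. The label set is $L_P = P \setminus \{R\}$ and the feature space is $\bigcup L_P$. For $x \in \mathbb{R}^n$, $P(x)$ denotes the member of $P$ containing $x$. The classifier is trivial if $L_P$ is a singleton, and non-trivial otherwise. An anchor for a point $x$ is an open ball $A = B(c,r)$ (center $c$, radius $r>0$) with $x \in A \subseteq P(x)$; its coverage is its radius $r$. The coverage of $P$ at $x$ is $C_P(x) = \sup\{ r : B(c,r) \text{ is an anchor for } x\}$, taken to be $0$ if $x$ has no anchor and $\infty$ if there are anchors for $x$ of arbitrarily large radius. $P$ has infinite pointwise coverage if $\inf\{C_P(x) : x \in \bigcup L_P\} = \infty$, i.e. $C_P(x) = \infty$ for every $x$ in the feature space. A refined linear classifier is a classifier of the form $P = \{M, N, R\}$ with $L_P = \{M, N\}$, where $R$ is an affine hyperplane in $\mathbb{R}^n$ and $M, N$ are the two open halfspaces on either side of $R$. *)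

theory Defs
  imports "HOL-Analysis.Analysis"
begin

definition nowhere_dense :: "'a::topological_space set \<Rightarrow> bool" where
  "nowhere_dense S \<longleftrightarrow> interior (closure S) = {}"

definition meagre :: "'a::topological_space set \<Rightarrow> bool" where
  "meagre S \<longleftrightarrow> (\<exists>F. countable F \<and> (\<forall>T\<in>F. nowhere_dense T) \<and> S \<subseteq> \<Union>F)"

definition classifier :: "'a::euclidean_space set set \<Rightarrow> 'a set \<Rightarrow> bool" where
  "classifier P R \<longleftrightarrow>
     \<Union>P = UNIV \<and>
     (\<forall>A\<in>P. \<forall>B\<in>P. A \<noteq> B \<longrightarrow> A \<inter> B = {}) \<and>
     (\<forall>A\<in>P. A \<noteq> R \<longrightarrow> A \<noteq> {}) \<and>
     R \<in> P \<and> meagre R \<and> R \<in> null_sets lebesgue"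

definition labels :: "'a set set \<Rightarrow> 'a set \<Rightarrow> 'a set set" where
  "labels P R = P - {R}"

definition nontrivial_classifier :: "'a set set \<Rightarrow> 'a set \<Rightarrow> bool" where
  "nontrivial_classifier P R \<longleftrightarrow> \<not> (\<exists>A. labels P R = {A})"

definition cell :: "'a set set \<Rightarrow> 'a \<Rightarrow> 'a set" where
  "cell P x = (THE A. A \<in> P \<and> x \<in> A)"

definition anchor :: "'a::metric_space set set \<Rightarrow> 'a \<Rightarrow> 'a \<Rightarrow> real \<Rightarrow> bool" where
  "anchor P x c r \<longleftrightarrow> r > 0 \<and> x \<in> ball c r \<and> ball c r \<subseteq> cell P x"

definition coverage :: "'a::metric_space set set \<Rightarrow> 'a \<Rightarrow> ereal" where
  "coverage P x =
     (if \<exists>c r. anchor P x c r then Sup {ereal r | c r. anchor P x c r} else 0)"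

definition infinite_pointwise_coverage :: "'a::metric_space set set \<Rightarrow> 'a set \<Rightarrow> bool" where
  "infinite_pointwise_coverage P R \<longleftrightarrow>
     (INF x\<in>\<Union>(labels P R). coverage P x) = \<infinity>"

definition refined_linear_classifier :: "'a::euclidean_space set set \<Rightarrow> 'a set \<Rightarrow> bool" where
  "refined_linear_classifier P R \<longleftrightarrow>
     (\<exists>a b. a \<noteq> 0 \<and> R = {x. a \<bullet> x = b} \<and>
        labels P R = {{x. a \<bullet> x < b}, {x. a \<bullet> x > b}} \<and>
        P = {{x. a \<bullet> x < b}, {x. a \<bullet> x > b}, R})"

end

theory Submission
  imports Defs
begin

(* If every label contains balls of unbounded radius through each of its points, then a label
   containing x and missing some point w contains an open halfspace {y. u \<bullet> x < u \<bullet> y}: take u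
   as a limit point of the unit directions from x to the centres of ever larger balls, which
   must recede to infinity because they avoid w. Two disjoint open halfspaces have opposite
   normals, so with at least two labels there are exactly two, M and N, closed upwards resp.
   downwards along a single direction u. Being open, they are open halfspaces
   u \<bullet> y > \<alpha> and u \<bullet> y < \<beta>; the rest R is null, hence has empty interior, which forces
   \<alpha> = \<beta> and makes R the separating hyperplane. Conversely, an open halfspace contains
   arbitrarily large balls through each of its points. *)

definition large_balls_at :: "'a::metric_space set \<Rightarrow> 'a \<Rightarrow> bool" where
  "large_balls_at S x \<longleftrightarrow> (\<forall>K>0. \<exists>c r. K < r \<and> x \<in> ball c r \<and> ball c r \<subseteq> S)"

lemma large_balls_atD:
  "large_balls_at S x \<Longrightarrow> 0 < K \<Longrightarrow> \<exists>c r. K < r \<and> x \<in> ball c r \<and> ball c r \<subseteq> S"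
  by (simp add: large_balls_at_def)

lemma coverage_eq_infinity_iff:
  "coverage P x = \<infinity> \<longleftrightarrow> large_balls_at (cell P x) x"
proof
  assume cov: "coverage P x = \<infinity>"
  then have "\<exists>c r. anchor P x c r"
    by (auto simp: coverage_def split: if_splits)
  with cov have sup: "Sup {ereal r | c r. anchor P x c r} = \<infinity>"
    by (simp add: coverage_def)
  show "large_balls_at (cell P x) x"
    unfolding large_balls_at_def
  proof (intro allI impI)
    fix K :: real
    have "ereal K < Sup {ereal r | c r. anchor P x c r}"
      using sup by simp
    then obtain c r where "K < r" "anchor P x c r"
      by (auto simp: less_Sup_iff)
    then show "\<exists>c r. K < r \<and> x \<in> ball c r \<and> ball c r \<subseteq> cell P x"
      by (auto simp: anchor_def)
  qed
next
  assume big: "large_balls_at (cell P x) x"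
  have anchor_gt: "\<exists>c r. K < r \<and> anchor P x c r" for K
  proof -
    have "0 < max K 1"
      by simp
    then obtain c r where "max K 1 < r" "x \<in> ball c r" "ball c r \<subseteq> cell P x"
      using large_balls_atD[OF big] by blast
    then show ?thesis
      unfolding anchor_def by (intro exI[of _ c] exI[of _ r]) simp
  qed
  have "Sup {ereal r | c r. anchor P x c r} = \<infinity>"
  proof (rule ereal_top)
    fix B
    obtain c r where "B < r" "anchor P x c r"
      using anchor_gt by blast
    then have "ereal r \<in> {ereal r | c r. anchor P x c r}" "ereal B \<le> ereal r"
      by auto
    then show "ereal B \<le> Sup {ereal r | c r. anchor P x c r}"
      by (rule Sup_upper2)
  qed
  moreover have "\<exists>c r. anchor P x c r"
    using anchor_gt by blast
  ultimately show "coverage P x = \<infinity>"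
    by (simp add: coverage_def)
qed

lemma cell_eqI:
  assumes "\<forall>A\<in>P. \<forall>B\<in>P. A \<noteq> B \<longrightarrow> A \<inter> B = {}" "A \<in> P" "x \<in> A"
  shows "cell P x = A"
  unfolding cell_def using assms by (intro the_equality) blast+

lemma infinite_pointwise_coverage_iff:
  assumes "classifier P R"
  shows "infinite_pointwise_coverage P R \<longleftrightarrow> (\<forall>L\<in>labels P R. \<forall>x\<in>L. large_balls_at L x)"
proof -
  have "cell P x = L" if "L \<in> labels P R" "x \<in> L" for L x
    using assms that by (intro cell_eqI) (auto simp: classifier_def labels_def)
  then have "coverage P x = \<infinity> \<longleftrightarrow> large_balls_at L x" if "L \<in> labels P R" "x \<in> L" for L x
    using that by (simp add: coverage_eq_infinity_iff)
  then show ?thesis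
    unfolding infinite_pointwise_coverage_def top_ereal_def[symmetric] INF_top_conv
    by (simp add: top_ereal_def)
qed

lemma ball_subset_halfspace:
  fixes a :: "'a::real_inner"
  assumes "a \<noteq> 0" "a \<bullet> c + norm a * r \<le> b"
  shows "ball c r \<subseteq> {y. a \<bullet> y < b}"
proof
  fix y assume "y \<in> ball c r"
  then have "norm a * norm (y - c) < norm a * r"
    using assms(1) by (simp add: dist_norm norm_minus_commute)
  moreover have "a \<bullet> y = a \<bullet> c + a \<bullet> (y - c)"
    by (simp add: inner_diff_right)
  moreover have "a \<bullet> (y - c) \<le> norm a * norm (y - c)"
    by (rule norm_cauchy_schwarz)
  ultimately show "y \<in> {y. a \<bullet> y < b}"
    using assms(2) by simp
qed

lemma halfspace_large_balls_at:
  fixes a :: "'a::real_inner"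
  assumes "a \<noteq> 0" "a \<bullet> x < b"
  shows "large_balls_at {y. a \<bullet> y < b} x"
  unfolding large_balls_at_def
proof (intro allI impI)
  fix K :: real assume "K > 0"
  define \<delta> where "\<delta> = (b - a \<bullet> x) / (2 * norm a)"
  define c where "c = x - (K / norm a) *\<^sub>R a"
  have "\<delta> > 0"
    using assms by (simp add: \<delta>_def)
  moreover have "x \<in> ball c (K + \<delta>)"
    using \<open>K > 0\<close> \<open>\<delta> > 0\<close> assms(1) by (simp add: c_def dist_norm)
  moreover have "a \<bullet> c + norm a * (K + \<delta>) \<le> b"
    using assms by (simp add: c_def \<delta>_def inner_diff_right field_simps dot_square_norm power2_eq_square)
  ultimately show "\<exists>c r. K < r \<and> x \<in> ball c r \<and> ball c r \<subseteq> {y. a \<bullet> y < b}"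
    using ball_subset_halfspace[OF assms(1)] by (intro exI[of _ c] exI[of _ "K + \<delta>"]) auto
qed

lemma mem_ball_if_inner_gt:
  fixes x y c :: "'a::real_inner"
  assumes "norm (y - x)^2 < 2 * ((c - x) \<bullet> (y - x))" "dist x c \<le> r"
  shows "y \<in> ball c r"
proof -
  have "norm (y - c)^2 = norm (y - x)^2 - 2 * ((c - x) \<bullet> (y - x)) + norm (c - x)^2"
    unfolding power2_norm_eq_inner by (simp add: inner_diff_left inner_diff_right inner_commute)
  also have "\<dots> < norm (c - x)^2"
    using assms(1) by simp
  finally have "norm (y - c) < norm (c - x)"
    by (simp add: power_less_imp_less_base)
  with assms(2) show ?thesis
    by (simp add: dist_norm norm_minus_commute)
qed

lemma halfspace_subset_of_receding_balls:
  fixes c :: "nat \<Rightarrow> 'a::real_inner"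
  assumes "\<And>k. dist x (c k) \<le> r k" "\<And>k. ball (c k) (r k) \<subseteq> S"
    and far: "filterlim (\<lambda>k. dist x (c k)) at_top sequentially"
    and dir: "(\<lambda>k. (c k - x) /\<^sub>R dist x (c k)) \<longlonglongrightarrow> u"
    and "u \<bullet> x < u \<bullet> y"
  shows "y \<in> S"
proof -
  define \<delta> where "\<delta> = u \<bullet> (y - x)"
  have "\<delta> > 0"
    using \<open>u \<bullet> x < u \<bullet> y\<close> by (simp add: \<delta>_def inner_diff_right)
  have "(\<lambda>k. ((c k - x) /\<^sub>R dist x (c k)) \<bullet> (y - x)) \<longlonglongrightarrow> \<delta>"
    unfolding \<delta>_def by (intro tendsto_intros dir)
  then have "eventually (\<lambda>k. \<delta> / 2 < ((c k - x) /\<^sub>R dist x (c k)) \<bullet> (y - x)) sequentially"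
    by (rule order_tendstoD(1)) (use \<open>\<delta> > 0\<close> in simp)
  moreover have "eventually (\<lambda>k. max 0 (norm (y - x)^2 / \<delta>) < dist x (c k)) sequentially"
    using far unfolding filterlim_at_top_dense by blast
  ultimately obtain k where k: "\<delta> / 2 < ((c k - x) /\<^sub>R dist x (c k)) \<bullet> (y - x)"
    "max 0 (norm (y - x)^2 / \<delta>) < dist x (c k)"
    using eventually_happens[OF eventually_conj] by fastforce
  have "norm (y - x)^2 < dist x (c k) * \<delta>"
    using k(2) \<open>\<delta> > 0\<close> by (simp add: pos_divide_less_eq)
  also have "\<dots> < 2 * ((c k - x) \<bullet> (y - x))"
  proof -
    have "0 < dist x (c k)"
      using k(2) by simp
    moreover have "\<delta> / 2 < ((c k - x) \<bullet> (y - x)) / dist x (c k)"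
      using k(1) by (simp only: inner_scaleR_left divide_inverse_commute)
    ultimately show ?thesis
      by (simp add: field_simps)
  qed
  finally have "y \<in> ball (c k) (r k)"
    using assms(1) by (rule mem_ball_if_inner_gt)
  then show ?thesis
    using assms(2) by blast
qed

lemma large_balls_at_imp_halfspace_subset:
  fixes S :: "'a::euclidean_space set"
  assumes big: "large_balls_at S x" and "w \<notin> S"
  shows "\<exists>u. norm u = 1 \<and> {y. u \<bullet> x < u \<bullet> y} \<subseteq> S"
proof -
  have "\<exists>c r. real k + dist w x < r \<and> x \<in> ball c r \<and> ball c r \<subseteq> S" for k :: nat
  proof -
    have "0 < real k + dist w x + 1"
      using zero_le_dist[of w x] of_nat_0_le_iff[of k] by linarith
    then obtain c r where "real k + dist w x + 1 < r" "x \<in> ball c r" "ball c r \<subseteq> S"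
      using large_balls_atD[OF big] by blast
    then show ?thesis
      by (intro exI[of _ c] exI[of _ r]) simp
  qed
  then obtain c r where cr: "\<And>k. real k + dist w x < r k" "\<And>k. x \<in> ball (c k) (r k)"
    "\<And>k. ball (c k) (r k) \<subseteq> S"
    by metis
  define d where "d k = dist x (c k)" for k
  have d_gt: "real k < d k" for k
  proof -
    have "r k \<le> dist (c k) w"
      using cr(3)[of k] \<open>w \<notin> S\<close> by (meson mem_ball not_le subsetD)
    also have "\<dots> \<le> dist w x + d k"
      by (simp add: d_def dist_commute dist_triangle)
    finally show ?thesis
      using cr(1)[of k] by linarith
  qed
  have "filterlim d at_top sequentially"
    by (rule filterlim_at_top_mono[OF filterlim_real_sequentially]) (use d_gt in \<open>simp add: less_imp_le\<close>)
  define v where "v k = (c k - x) /\<^sub>R d k" for k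
  have "0 < d k" for k
    using d_gt[of k] of_nat_0_le_iff[of k] by linarith
  then have "norm (v k) = 1" for k
    by (simp add: v_def d_def dist_norm norm_minus_commute)
  then obtain u \<sigma> where u: "norm u = 1" and \<sigma>: "strict_mono \<sigma>" and lim: "(v \<circ> \<sigma>) \<longlonglongrightarrow> u"
    using compact_sphere[of "0::'a" 1] unfolding compact_def by (metis mem_sphere_0)
  have "y \<in> S" if "u \<bullet> x < u \<bullet> y" for y
  proof (rule halfspace_subset_of_receding_balls[of x "c \<circ> \<sigma>" "r \<circ> \<sigma>"])
    show "dist x ((c \<circ> \<sigma>) k) \<le> (r \<circ> \<sigma>) k" "ball ((c \<circ> \<sigma>) k) ((r \<circ> \<sigma>) k) \<subseteq> S" for k
      using cr(2,3)[of "\<sigma> k"] by (simp_all add: dist_commute less_imp_le)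
    show "filterlim (\<lambda>k. dist x ((c \<circ> \<sigma>) k)) at_top sequentially"
      using filterlim_compose[OF \<open>filterlim d at_top sequentially\<close> filterlim_subseq[OF \<sigma>]]
      by (simp add: d_def comp_def)
    show "(\<lambda>k. ((c \<circ> \<sigma>) k - x) /\<^sub>R dist x ((c \<circ> \<sigma>) k)) \<longlonglongrightarrow> u"
      using lim by (simp add: v_def d_def comp_def)
  qed (fact that)
  with u show ?thesis
    by blast
qed

lemma disjoint_halfspaces_opposite:
  fixes u v :: "'a::real_inner"
  assumes "norm u = 1" "norm v = 1"
    and "{y. p < u \<bullet> y} \<subseteq> A" "{y. q < v \<bullet> y} \<subseteq> B" "A \<inter> B = {}"
  shows "v = - u"
proof (rule ccontr)
  assume "v \<noteq> - u"
  then have "u + v \<noteq> 0"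
    by (simp add: add_eq_0_iff)
  define s where "s = (u + v) \<bullet> (u + v)"
  have "s > 0"
    using \<open>u + v \<noteq> 0\<close> by (simp add: s_def)
  have "u \<bullet> u = 1" "v \<bullet> v = 1"
    using assms(1,2) by (simp_all add: norm_eq_1)
  then have uv: "u \<bullet> (u + v) = s / 2" "v \<bullet> (u + v) = s / 2"
    by (auto simp: s_def inner_add_left inner_add_right inner_commute)
  \<comment> \<open>far enough along u + v both halfspaces are entered\<close>
  define t where "t = 2 * (\<bar>p\<bar> + \<bar>q\<bar> + 1) / s"
  have "t * (s / 2) = \<bar>p\<bar> + \<bar>q\<bar> + 1"
    using \<open>s > 0\<close> by (simp add: t_def)
  then have "p < t * (s / 2)" "q < t * (s / 2)"
    by linarith+
  then have "t *\<^sub>R (u + v) \<in> A \<inter> B"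
    using assms(3,4) by (auto simp: uv)
  with assms(5) show False
    by blast
qed

lemma halfspace_family_eq_pair:
  fixes \<F> :: "'a::real_inner set set"
  assumes disj: "\<forall>A\<in>\<F>. \<forall>B\<in>\<F>. A \<noteq> B \<longrightarrow> A \<inter> B = {}" and "{} \<notin> \<F>"
    and M: "M \<in> \<F>" and N: "N \<in> \<F>" "M \<noteq> N"
    and dir: "\<And>L x. L \<in> \<F> \<Longrightarrow> x \<in> L \<Longrightarrow> \<exists>u. norm u = 1 \<and> {y. u \<bullet> x < u \<bullet> y} \<subseteq> L"
  obtains u where "norm u = 1" "\<F> = {M, N}"
    "\<And>x. x \<in> M \<Longrightarrow> {y. u \<bullet> x < u \<bullet> y} \<subseteq> M"
    "\<And>x. x \<in> N \<Longrightarrow> {y. u \<bullet> y < u \<bullet> x} \<subseteq> N"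
proof -
  have opposite: "q' = - q"
    if "L \<in> \<F>" "norm q = 1" "{y. q \<bullet> x < q \<bullet> y} \<subseteq> L"
      "L' \<in> \<F>" "norm q' = 1" "{y. q' \<bullet> x' < q' \<bullet> y} \<subseteq> L'" "L \<noteq> L'" for L L' q q' x x'
    using disjoint_halfspaces_opposite[OF that(2,5,3,6)] disj that(1,4,7) by blast
  have normal: "\<exists>x p. norm p = 1 \<and> {y. p \<bullet> x < p \<bullet> y} \<subseteq> L" if L: "L \<in> \<F>" for L
  proof -
    obtain x where "x \<in> L"
      using L \<open>{} \<notin> \<F>\<close> by (metis ex_in_conv)
    then show ?thesis
      using dir[OF L] by blast
  qed
  obtain x0 u where u: "norm u = 1" "{y. u \<bullet> x0 < u \<bullet> y} \<subseteq> M"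
    using normal[OF M] by blast
  obtain z0 q where q: "norm q = 1" "{y. q \<bullet> z0 < q \<bullet> y} \<subseteq> N"
    using normal[OF N(1)] by blast
  have "q = - u"
    using opposite[OF M u N(1) q N(2)] .
  have "L \<in> {M, N}" if L: "L \<in> \<F>" for L
  proof (rule ccontr)
    assume "L \<notin> {M, N}"
    obtain x p where p: "norm p = 1" "{y. p \<bullet> x < p \<bullet> y} \<subseteq> L"
      using normal[OF L] by blast
    have "p = - u" "p = - q"
      using opposite[OF M u L p] opposite[OF N(1) q L p] \<open>L \<notin> {M, N}\<close> by auto
    then have "u \<bullet> u = - (u \<bullet> u)"
      using \<open>q = - u\<close> by (metis inner_minus_left minus_minus)
    with u(1) show False
      by (simp add: norm_eq_1)
  qed
  with M N have "\<F> = {M, N}"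
    by blast
  moreover have "{y. u \<bullet> x < u \<bullet> y} \<subseteq> M" if x: "x \<in> M" for x
  proof -
    obtain p where p: "norm p = 1" "{y. p \<bullet> x < p \<bullet> y} \<subseteq> M"
      using dir[OF M x] by blast
    then have "p = - q"
      using opposite[OF N(1) q M p] N(2) by auto
    with p(2) \<open>q = - u\<close> show ?thesis
      by simp
  qed
  moreover have "{y. u \<bullet> y < u \<bullet> x} \<subseteq> N" if x: "x \<in> N" for x
  proof -
    obtain p where p: "norm p = 1" "{y. p \<bullet> x < p \<bullet> y} \<subseteq> N"
      using dir[OF N(1) x] by blast
    have "p = - u"
      using opposite[OF M u N(1) p N(2)] .
    with p(2) show ?thesis
      by simp
  qed
  ultimately show ?thesis
    using that u(1) by blast
qed

lemma open_upward_closed_eq_halfspace: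
  fixes S :: "'a::real_inner set"
  assumes "open S" "S \<noteq> {}" "w \<notin> S" "norm u = 1"
    and up: "\<And>x. x \<in> S \<Longrightarrow> {y. u \<bullet> x < u \<bullet> y} \<subseteq> S"
  obtains \<alpha> where "S = {y. \<alpha> < u \<bullet> y}"
proof
  have "u \<bullet> w \<le> u \<bullet> x" if "x \<in> S" for x
    using up[OF that] \<open>w \<notin> S\<close> by (meson mem_Collect_eq not_le subsetD)
  then have bdd: "bdd_below ((\<bullet>) u ` S)"
    by (rule bdd_belowI2)
  show "S = {y. Inf ((\<bullet>) u ` S) < u \<bullet> y}"
  proof (intro set_eqI iffI)
    fix y assume "y \<in> S"
    then obtain e where "e > 0" "ball y e \<subseteq> S"
      using \<open>open S\<close> open_contains_ball by blast
    then have "y - (e / 2) *\<^sub>R u \<in> S"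
      using \<open>norm u = 1\<close> by (auto simp: dist_norm)
    then have "Inf ((\<bullet>) u ` S) \<le> u \<bullet> y - e / 2"
      using bdd \<open>norm u = 1\<close> by (auto intro!: cInf_lower2 simp: inner_diff_right norm_eq_1)
    with \<open>e > 0\<close> show "y \<in> {y. Inf ((\<bullet>) u ` S) < u \<bullet> y}"
      by simp
  next
    fix y assume "y \<in> {y. Inf ((\<bullet>) u ` S) < u \<bullet> y}"
    then obtain x where "x \<in> S" "u \<bullet> x < u \<bullet> y"
      using \<open>S \<noteq> {}\<close> by (auto simp: cInf_less_iff bdd)
    with up show "y \<in> S"
      by blast
  qed
qed

lemma complementary_open_halfspaces:
  fixes M N :: "'a::euclidean_space set"
  assumes "open M" "open N" "M \<inter> N = {}" "M \<noteq> {}" "N \<noteq> {}" "norm u = 1"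
    and upM: "\<And>x. x \<in> M \<Longrightarrow> {y. u \<bullet> x < u \<bullet> y} \<subseteq> M"
    and downN: "\<And>x. x \<in> N \<Longrightarrow> {y. u \<bullet> y < u \<bullet> x} \<subseteq> N"
    and null: "negligible (- (M \<union> N))"
  obtains \<alpha> where "M = {y. \<alpha> < u \<bullet> y}" "N = {y. u \<bullet> y < \<alpha>}"
proof -
  obtain z w where "z \<in> M" "z \<notin> N" "w \<in> N" "w \<notin> M"
    using assms(3-5) by blast
  obtain \<alpha> where M_eq: "M = {y. \<alpha> < u \<bullet> y}"
    using open_upward_closed_eq_halfspace[OF \<open>open M\<close> \<open>M \<noteq> {}\<close> \<open>w \<notin> M\<close> \<open>norm u = 1\<close> upM]
    by blast
  have "norm (- u) = 1"
    using \<open>norm u = 1\<close> by simp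
  moreover have "{y. (- u) \<bullet> x < (- u) \<bullet> y} \<subseteq> N" if "x \<in> N" for x
    using downN[OF that] by simp
  ultimately obtain \<beta> where "N = {y. \<beta> < (- u) \<bullet> y}"
    using open_upward_closed_eq_halfspace[OF \<open>open N\<close> \<open>N \<noteq> {}\<close> \<open>z \<notin> N\<close>] by blast
  then have N_eq: "N = {y. u \<bullet> y < - \<beta>}"
    by auto
  define m where "m = ((\<alpha> - \<beta>) / 2) *\<^sub>R u"
  have um: "u \<bullet> m = (\<alpha> - \<beta>) / 2"
    using \<open>norm u = 1\<close> by (simp add: m_def norm_eq_1)
  have "\<not> \<alpha> < - \<beta>"
  proof
    assume "\<alpha> < - \<beta>"
    then have "m \<in> M \<inter> N"
      using um unfolding M_eq N_eq by simp
    with \<open>M \<inter> N = {}\<close> show False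
      by blast
  qed
  moreover have "\<not> - \<beta> < \<alpha>"
  proof
    assume "- \<beta> < \<alpha>"
    \<comment> \<open>the open slab between the two halfspaces would be a nonempty open null set\<close>
    then have "m \<in> {y. - \<beta> < u \<bullet> y} \<inter> {y. u \<bullet> y < \<alpha>}"
      using um by simp
    moreover have "{y. - \<beta> < u \<bullet> y} \<inter> {y. u \<bullet> y < \<alpha>} \<subseteq> - (M \<union> N)"
      unfolding M_eq N_eq by auto
    ultimately show False
      using open_not_negligible[OF open_Int[OF open_halfspace_gt open_halfspace_lt]]
        negligible_subset null by blast
  qed
  ultimately have "\<alpha> = - \<beta>"
    by linarith
  with M_eq N_eq that show ?thesis
    by blast
qed

lemma nontrivial_classifier_two_labels:
  fixes P :: "'a::euclidean_space set set"
  assumes "classifier P R" "nontrivial_classifier P R"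
  obtains M N where "M \<in> labels P R" "N \<in> labels P R" "M \<noteq> N"
proof -
  have "labels P R \<noteq> {}"
  proof
    assume "labels P R = {}"
    then have "P \<subseteq> {R}"
      by (auto simp: labels_def)
    moreover have "\<Union>P = UNIV" "negligible R"
      using assms(1) by (simp_all add: classifier_def negligible_iff_null_sets)
    ultimately have "R = UNIV"
      by blast
    with \<open>negligible R\<close> have "negligible (UNIV :: 'a set)"
      by simp
    then show False
      using open_not_negligible[of UNIV] by simp
  qed
  then obtain M where "M \<in> labels P R"
    by blast
  moreover from this assms(2) obtain N where "N \<in> labels P R" "N \<noteq> M"
    unfolding nontrivial_classifier_def by blast
  ultimately show ?thesis
    using that by blast
qed

lemma open_if_large_balls_at:
  assumes "\<And>x. x \<in> S \<Longrightarrow> large_balls_at S x"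
  shows "open S"
proof (rule Topological_Spaces.openI)
  fix x assume "x \<in> S"
  then obtain c r where "x \<in> ball c r" "ball c r \<subseteq> S"
    using large_balls_atD[OF assms zero_less_one] by blast
  then show "\<exists>T. open T \<and> x \<in> T \<and> T \<subseteq> S"
    by blast
qed

lemma classifier_with_two_labels:
  assumes "classifier P R" "labels P R = {M, N}"
  shows "P = {M, N, R}" "R = - (M \<union> N)"
proof -
  have P: "\<Union>P = UNIV" "\<forall>A\<in>P. \<forall>B\<in>P. A \<noteq> B \<longrightarrow> A \<inter> B = {}" "R \<in> P"
    using assms(1) by (simp_all add: classifier_def)
  show P_eq: "P = {M, N, R}"
    using assms(2) P(3) unfolding labels_def by blast
  have "M \<noteq> R" "N \<noteq> R"
    using assms(2) unfolding labels_def by blast+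
  then show "R = - (M \<union> N)"
    using P(1,2) unfolding P_eq by blast
qed

lemma refined_linear_classifierI:
  assumes "classifier P R" "u \<noteq> 0" "labels P R = {{y. \<alpha> < u \<bullet> y}, {y. u \<bullet> y < \<alpha>}}"
  shows "refined_linear_classifier P R"
  unfolding refined_linear_classifier_def
proof (intro exI conjI)
  note P = classifier_with_two_labels[OF assms(1,3)]
  show "u \<noteq> 0"
    by (fact assms(2))
  show "R = {x. u \<bullet> x = \<alpha>}"
    using P(2) by auto
  show "labels P R = {{x. u \<bullet> x < \<alpha>}, {x. \<alpha> < u \<bullet> x}}"
    using assms(3) by auto
  show "P = {{x. u \<bullet> x < \<alpha>}, {x. \<alpha> < u \<bullet> x}, R}"
    using P(1) by auto
qed

lemma refined_linear_classifier_if_large_balls_at: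
  fixes P :: "'a::euclidean_space set set"
  assumes cl: "classifier P R" and "nontrivial_classifier P R"
    and big: "\<And>L x. L \<in> labels P R \<Longrightarrow> x \<in> L \<Longrightarrow> large_balls_at L x"
  shows "refined_linear_classifier P R"
proof -
  obtain M N where M: "M \<in> labels P R" and N: "N \<in> labels P R" "M \<noteq> N"
    using nontrivial_classifier_two_labels[OF assms(1,2)] .
  have disj: "\<forall>A\<in>labels P R. \<forall>B\<in>labels P R. A \<noteq> B \<longrightarrow> A \<inter> B = {}"
    and nonempty: "{} \<notin> labels P R"
    using cl by (auto simp: classifier_def labels_def)
  have "\<exists>u. norm u = 1 \<and> {y. u \<bullet> x < u \<bullet> y} \<subseteq> L" if "L \<in> labels P R" "x \<in> L" for L x
  proof -
    obtain L' where "L' \<in> labels P R" "L' \<noteq> L"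
      using M N by (cases "L = M") auto
    moreover from this obtain w where "w \<in> L'"
      using nonempty by (metis all_not_in_conv)
    ultimately have "w \<notin> L"
      using disj that by blast
    then show ?thesis
      using large_balls_at_imp_halfspace_subset big that by blast
  qed
  from halfspace_family_eq_pair[OF disj nonempty M N this]
  obtain u where u: "norm u = 1" and labels: "labels P R = {M, N}"
    and upM: "\<And>x. x \<in> M \<Longrightarrow> {y. u \<bullet> x < u \<bullet> y} \<subseteq> M"
    and downN: "\<And>x. x \<in> N \<Longrightarrow> {y. u \<bullet> y < u \<bullet> x} \<subseteq> N"
    by blast
  have "negligible (- (M \<union> N))"
    using cl classifier_with_two_labels(2)[OF cl labels]
    by (simp add: classifier_def negligible_iff_null_sets)
  moreover have "open M" "open N"
    using open_if_large_balls_at big M N by blast+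
  moreover have "M \<inter> N = {}" "M \<noteq> {}" "N \<noteq> {}"
    using disj nonempty M N by blast+
  ultimately obtain \<alpha> where "M = {y. \<alpha> < u \<bullet> y}" "N = {y. u \<bullet> y < \<alpha>}"
    using complementary_open_halfspaces[OF _ _ _ _ _ u upM downN] by blast
  with cl u labels show ?thesis
    by (intro refined_linear_classifierI[of P R u \<alpha>]) auto
qed

lemma large_balls_at_if_refined_linear_classifier:
  assumes "refined_linear_classifier P R" "L \<in> labels P R" "x \<in> L"
  shows "large_balls_at L x"
proof -
  obtain a b where "a \<noteq> 0" and labels: "labels P R = {{y. a \<bullet> y < b}, {y. b < a \<bullet> y}}"
    using assms(1) unfolding refined_linear_classifier_def by blast
  have "{y. b < a \<bullet> y} = {y. (- a) \<bullet> y < - b}"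
    by simp
  then have "L = {y. a \<bullet> y < b} \<or> L = {y. (- a) \<bullet> y < - b}"
    using assms(2) labels by simp
  with \<open>a \<noteq> 0\<close> assms(3) show ?thesis
    using halfspace_large_balls_at[of a x b] halfspace_large_balls_at[of "- a" x "- b"] by fastforce
qed

theorem theorem1:
  fixes P :: "'a::euclidean_space set set" and R :: "'a set"
  assumes "classifier P R"
    and "nontrivial_classifier P R"
  shows "infinite_pointwise_coverage P R \<longleftrightarrow> refined_linear_classifier P R"
proof -
  have "infinite_pointwise_coverage P R \<longleftrightarrow> (\<forall>L\<in>labels P R. \<forall>x\<in>L. large_balls_at L x)"
    by (rule infinite_pointwise_coverage_iff[OF assms(1)])
  also have "\<dots> \<longleftrightarrow> refined_linear_classifier P R"
    using refined_linear_classifier_if_large_balls_at[OF assms]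
      large_balls_at_if_refined_linear_classifier by blast
  finally show ?thesis .
qed

end
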